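(* For $\sigma \in \mathfrak{S}_j$ and $\tau \in \mathfrak{S}_k$, let $\sigma^{-1}=\sigma^{-1}_1\cdots \sigma^{-1}_j$ and $\tau^{-1}=\tau^{-1}_1\cdots \tau^{-1}_k$ denote the inverses of $\sigma$ and $\tau$ respectively. Define $\pi=\sigma^{-1}_1\cdots \sigma^{-1}_j$ and $\delta=(j+1)(\tau^{-1}_1+j+1)\cdots (\tau^{-1}_k+j+1)$. Then \begin{align*} \sum_{\mu \in \sigma \lozenge \tau} t^{\mathrm{ides}(\mu)}&=\sum_{\alpha \in \mathrm{Sh}_l(\pi,\delta)} t^{\mathrm{des}(\alpha)},\\ \sum_{\mu \in \sigma \vartriangle \tau} t^{\mathrm{ides}(\mu)}&=\sum_{\alpha \in \mathrm{Sh}_{ls}(\pi,\delta)} t^{\mathrm{des}(\alpha)},\\ \sum_{\mu \in \sigma \triangledown \tau} t^{\mathrm{ides}(\mu)}&=\sum_{\alpha \in \mathrm{Sh}_{ll}(\pi,\delta)} t^{\mathrm{des}(\alpha)}. \end{align*}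
   Context: $\mathfrak{S}_n$ is the set of permutations of $[n]$. For a permutation $\alpha=\alpha_1\cdots\alpha_n$, $\mathrm{des}(\alpha)$ is the number of indices $i$ with $\alpha_i>\alpha_{i+1}$, and $\mathrm{ides}(\alpha)=\mathrm{des}(\alpha^{-1})$. For $\sigma\in\mathfrak{S}_j$, $\tau\in\mathfrak{S}_k$: $\sigma \lozenge\tau =\{ \mu = \sigma'1\tau' \in \mathfrak{S}_{j+k+1} : \sigma' \sim \sigma,\ \tau' \sim \tau \}$; $\sigma \vartriangle \tau =\{ \mu = \sigma'1\tau' \in \mathfrak{S}_{j+k+1} : \sigma' \sim \sigma,\ \tau' \sim \tau,\ j+k+1\in \tau' \}$; $\sigma \triangledown \tau =\{ \mu = \sigma'1\tau' \in \mathfrak{S}_{j+k+1} : \sigma' \sim \sigma,\ \tau' \sim \tau,\ 2\in \tau' \}$, where $\sigma'\sim\sigma$ means that reducing the letters of $\sigma'$ order-preservingly to $\{1,\dots,j\}$ yields $\sigma$. A permutation of length $n$ here means a sequence of $n$ distinct integers. For disjoint permutations $\pi=\pi_1\cdots\pi_m$ and $\delta=\delta_1\cdots\delta_n$ (no common letters), a shuffle of $\pi$ and $\delta$ is a permutation $\alpha=\alpha_1\cdots\alpha_{m+n}$ containing both $\pi$ and $\delta$ as subsequences. $\mathrm{Sh}_l(\pi,\delta)$ is the set of shuffles $\alpha$ of $\pi$ and $\delta$ with $\alpha_1=\delta_1$; $\mathrm{Sh}_{ls}(\pi,\delta)$ is the set of shuffles with $\alpha_1=\delta_1$ and $\alpha_{n+m}=\delta_n$;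 $\mathrm{Sh}_{ll}(\pi,\delta)$ is the set of shuffles with $\alpha_1=\delta_1$ and $\alpha_2=\delta_2$. *)

theory Defs
  imports Main "HOL-Library.Sublist"
begin

definition perms :: "nat \<Rightarrow> nat list set" where
  "perms n = {xs. distinct xs \<and> set xs = {1..n}}"

definition des :: "nat list \<Rightarrow> nat" where
  "des xs = card {i. Suc i < length xs \<and> xs ! i > xs ! Suc i}"

text \<open>Inverse of a permutation of 1..n given in one-line notation.\<close>
definition inv_perm :: "nat list \<Rightarrow> nat list" where
  "inv_perm xs = map (\<lambda>v. Suc (LEAST i. i < length xs \<and> xs ! i = v)) [1..<Suc (length xs)]"

definition ides :: "nat list \<Rightarrow> nat" where
  "ides xs = des (inv_perm xs)"

text \<open>Order-preserving reduction (standardization) of a word of distinct letters to 1..length.\<close>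
definition red :: "nat list \<Rightarrow> nat list" where
  "red xs = map (\<lambda>x. Suc (card {y \<in> set xs. y < x})) xs"

definition diamond :: "nat list \<Rightarrow> nat list \<Rightarrow> nat list set" where
  "diamond \<sigma> \<tau> = {\<mu> \<in> perms (length \<sigma> + length \<tau> + 1).
      \<exists>\<sigma>' \<tau>'. \<mu> = \<sigma>' @ [1] @ \<tau>' \<and> red \<sigma>' = \<sigma> \<and> red \<tau>' = \<tau>}"

definition utri :: "nat list \<Rightarrow> nat list \<Rightarrow> nat list set" where
  "utri \<sigma> \<tau> = {\<mu> \<in> perms (length \<sigma> + length \<tau> + 1).
      \<exists>\<sigma>' \<tau>'. \<mu> = \<sigma>' @ [1] @ \<tau>' \<and> red \<sigma>' = \<sigma> \<and> red \<tau>' = \<tau>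
              \<and> length \<sigma> + length \<tau> + 1 \<in> set \<tau>'}"

definition dtri :: "nat list \<Rightarrow> nat list \<Rightarrow> nat list set" where
  "dtri \<sigma> \<tau> = {\<mu> \<in> perms (length \<sigma> + length \<tau> + 1).
      \<exists>\<sigma>' \<tau>'. \<mu> = \<sigma>' @ [1] @ \<tau>' \<and> red \<sigma>' = \<sigma> \<and> red \<tau>' = \<tau>
              \<and> 2 \<in> set \<tau>'}"

definition is_shuffle :: "nat list \<Rightarrow> nat list \<Rightarrow> nat list \<Rightarrow> bool" where
  "is_shuffle \<pi> \<delta> \<alpha> \<longleftrightarrow> distinct \<alpha> \<and> length \<alpha> = length \<pi> + length \<delta>
      \<and> subseq \<pi> \<alpha> \<and> subseq \<delta> \<alpha>"

definition Sh_l :: "nat list \<Rightarrow> nat list \<Rightarrow> nat list set" where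
  "Sh_l \<pi> \<delta> = {\<alpha>. is_shuffle \<pi> \<delta> \<alpha> \<and> 1 \<le> length \<delta> \<and> \<alpha> ! 0 = \<delta> ! 0}"

definition Sh_ls :: "nat list \<Rightarrow> nat list \<Rightarrow> nat list set" where
  "Sh_ls \<pi> \<delta> = {\<alpha>. is_shuffle \<pi> \<delta> \<alpha> \<and> 1 \<le> length \<delta> \<and> \<alpha> ! 0 = \<delta> ! 0
      \<and> \<alpha> ! (length \<pi> + length \<delta> - 1) = \<delta> ! (length \<delta> - 1)}"

definition Sh_ll :: "nat list \<Rightarrow> nat list \<Rightarrow> nat list set" where
  "Sh_ll \<pi> \<delta> = {\<alpha>. is_shuffle \<pi> \<delta> \<alpha> \<and> 2 \<le> length \<delta> \<and> \<alpha> ! 0 = \<delta> ! 0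
      \<and> \<alpha> ! 1 = \<delta> ! 1}"

end

theory Submission
  imports Defs
begin

(* Inversion is an involution of S_n carrying ides to des, so each identity amounts to saying that
   \<mu> \<mapsto> \<mu>\<^sup>-\<^sup>1 maps the relevant set of permutations onto the corresponding set of shuffles.
   Write \<mu> = \<sigma>' 1 \<tau>' with |\<sigma>'| = j. The word \<mu>\<^sup>-\<^sup>1 lists the positions of 1, ..., n in \<mu>:
   it starts with j + 1, the position of 1; its letters \<le> j are the positions of the letters of \<sigma>'
   taken in increasing order of value, i.e. they spell (red \<sigma>')\<^sup>-\<^sup>1; and its letters > j + 1 spell
   (red \<tau>')\<^sup>-\<^sup>1 shifted by j + 1. Hence \<mu> \<in> \<sigma> \<diamond> \<tau> iff \<mu>\<^sup>-\<^sup>1 is a shuffle of \<pi> and \<delta>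
   starting with \<delta>\<^sub>1 = j + 1. Moreover n lies in \<tau>' iff the last letter of \<mu>\<^sup>-\<^sup>1 exceeds j + 1,
   i.e. comes from \<delta>, and 2 lies in \<tau>' iff the second letter of \<mu>\<^sup>-\<^sup>1 does. *)

section \<open>Positions of letters\<close>

definition index_of :: "nat list \<Rightarrow> nat \<Rightarrow> nat" where
  "index_of xs v = (LEAST i. i < length xs \<and> xs ! i = v)"

lemma index_of_in_set:
  assumes "v \<in> set xs"
  shows "index_of xs v < length xs" and "xs ! index_of xs v = v"
proof -
  obtain i where "i < length xs \<and> xs ! i = v"
    using assms by (auto simp: in_set_conv_nth)
  then have "index_of xs v < length xs \<and> xs ! index_of xs v = v"
    unfolding index_of_def by (rule LeastI)
  then show "index_of xs v < length xs" and "xs ! index_of xs v = v" by auto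
qed

lemma index_of_nth:
  assumes "distinct xs" and "i < length xs"
  shows "index_of xs (xs ! i) = i"
  using assms index_of_in_set[of "xs ! i" xs] nth_eq_iff_index_eq by auto

lemma in_set_take_iff_index_of:
  assumes "distinct xs" and "v \<in> set xs"
  shows "v \<in> set (take m xs) \<longleftrightarrow> index_of xs v < m"
  using assms index_of_in_set[OF assms(2)] index_of_nth
  by (auto simp: in_set_conv_nth) metis+

lemma index_of_take:
  assumes "distinct xs" and "v \<in> set (take m xs)"
  shows "index_of (take m xs) v = index_of xs v"
proof -
  obtain i where "i < length (take m xs)" and "take m xs ! i = v"
    using assms(2) by (auto simp: in_set_conv_nth)
  then show ?thesis
    using assms(1) index_of_nth[of "take m xs" i] index_of_nth[of xs i] by auto
qed

lemma in_set_drop_iff_index_of: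
  assumes "distinct xs" and "v \<in> set xs"
  shows "v \<in> set (drop m xs) \<longleftrightarrow> m \<le> index_of xs v"
proof -
  have "set xs = set (take m xs) \<union> set (drop m xs)"
    and "set (take m xs) \<inter> set (drop m xs) = {}"
    using append_take_drop_id[of m xs] assms(1) by (metis set_append, metis distinct_append)
  then show ?thesis
    using in_set_take_iff_index_of[OF assms, of m] assms(2) by auto
qed

lemma index_of_drop:
  assumes "distinct xs" and "v \<in> set (drop m xs)"
  shows "index_of xs v = index_of (drop m xs) v + m"
proof -
  obtain i where "i < length (drop m xs)" and "drop m xs ! i = v"
    using assms(2) by (auto simp: in_set_conv_nth)
  then show ?thesis
    using assms(1) index_of_nth[of "drop m xs" i] index_of_nth[of xs "m + i"] by auto
qed

section \<open>Inverses of words\<close>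

lemma length_perms: "xs \<in> perms n \<Longrightarrow> length xs = n"
  unfolding perms_def using distinct_card by fastforce

lemma length_inv_perm [simp]: "length (inv_perm xs) = length xs"
  unfolding inv_perm_def by (simp del: upt_Suc)

definition inv_word :: "nat list \<Rightarrow> nat list" where
  "inv_word xs = map (\<lambda>v. Suc (index_of xs v)) (sorted_list_of_set (set xs))"

lemma inv_perm_eq_inv_word:
  assumes "xs \<in> perms n"
  shows "inv_perm xs = inv_word xs"
proof -
  have "sorted_list_of_set (set xs) = [1..<Suc n]"
    using assms unfolding perms_def by (simp add: atLeastLessThanSuc_atLeastAtMost[symmetric])
  then show ?thesis
    unfolding inv_perm_def inv_word_def index_of_def length_perms[OF assms] by simp
qed

lemma nth_inv_perm:
  assumes "xs \<in> perms n" and "i < n"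
  shows "inv_perm xs ! i = Suc (index_of xs (Suc i))"
  using assms unfolding inv_perm_def index_of_def length_perms[OF assms(1)]
  by (simp del: upt_Suc)

lemma inv_word_in_perms:
  assumes "distinct xs"
  shows "inv_word xs \<in> perms (length xs)"
proof -
  define f where "f v = Suc (index_of xs v)" for v
  have "inj_on f (set xs)"
    by (rule inj_onI) (metis f_def index_of_in_set(2) nat.inject)
  moreover have "f ` set xs = {1..length xs}"
  proof -
    have "set xs = (!) xs ` {..<length xs}"
      by (auto simp: in_set_conv_nth)
    then have "f ` set xs = Suc ` {..<length xs}"
      using assms by (auto simp: f_def index_of_nth image_iff)
    then show ?thesis
      by (simp add: atLeastLessThanSuc_atLeastAtMost[symmetric] lessThan_atLeast0)
  qed
  ultimately show ?thesis
    unfolding perms_def inv_word_def f_def[symmetric] by (simp add: distinct_map)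
qed

lemma inv_perm_in_perms:
  assumes "xs \<in> perms n"
  shows "inv_perm xs \<in> perms n"
  using inv_word_in_perms[of xs] assms
  unfolding inv_perm_eq_inv_word[OF assms] length_perms[OF assms] by (simp add: perms_def)

lemma inv_perm_inv_perm:
  assumes xs: "xs \<in> perms n"
  shows "inv_perm (inv_perm xs) = xs"
proof (rule nth_equalityI)
  have ys: "inv_perm xs \<in> perms n"
    using xs by (rule inv_perm_in_perms)
  show "length (inv_perm (inv_perm xs)) = length xs"
    by simp
  fix i assume "i < length (inv_perm (inv_perm xs))"
  then have i: "i < n"
    using length_perms[OF xs] by simp
  define v where "v = xs ! i"
  have v: "v \<in> {1..n}"
    using xs i unfolding v_def perms_def length_perms[OF xs, symmetric] by auto
  then have "v - 1 < n" and "Suc (v - 1) = v"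
    by auto
  then have "inv_perm xs ! (v - 1) = Suc i"
    using nth_inv_perm[OF xs] index_of_nth[of xs i] xs i
    by (simp add: v_def perms_def length_perms[OF xs])
  then have "index_of (inv_perm xs) (Suc i) = v - 1"
    using index_of_nth[of "inv_perm xs" "v - 1"] ys \<open>v - 1 < n\<close> length_perms[OF xs]
    by (simp add: perms_def)
  then show "inv_perm (inv_perm xs) ! i = xs ! i"
    using nth_inv_perm[OF ys i] v by (simp add: v_def)
qed

lemma sorted_list_of_set_filter:
  assumes "finite A"
  shows "sorted_list_of_set {x \<in> A. P x} = filter P (sorted_list_of_set A)"
  using assms by (subst sorted_list_of_set_unique[symmetric])
    (auto intro: sorted_wrt_filter simp: distinct_card[symmetric])

lemma filter_le_inv_word:
  assumes "distinct xs"
  shows "filter (\<lambda>p. p \<le> m) (inv_word xs) = inv_word (take m xs)"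
proof -
  have "{v \<in> set xs. Suc (index_of xs v) \<le> m} = set (take m xs)"
    using in_set_take_iff_index_of[OF assms] set_take_subset by fastforce
  then have "filter (\<lambda>p. p \<le> m) (inv_word xs)
      = map (\<lambda>v. Suc (index_of xs v)) (sorted_list_of_set (set (take m xs)))"
    unfolding inv_word_def filter_map by (simp add: sorted_list_of_set_filter[symmetric] o_def)
  also have "\<dots> = inv_word (take m xs)"
    unfolding inv_word_def using index_of_take[OF assms] by (intro map_cong) auto
  finally show ?thesis .
qed

lemma filter_gt_inv_word:
  assumes "distinct xs"
  shows "filter (\<lambda>p. m < p) (inv_word xs) = map (\<lambda>p. p + m) (inv_word (drop m xs))"
proof -
  have "{v \<in> set xs. m < Suc (index_of xs v)} = set (drop m xs)"
    using in_set_drop_iff_index_of[OF assms] set_drop_subset by fastforce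
  then have "filter (\<lambda>p. m < p) (inv_word xs)
      = map (\<lambda>v. Suc (index_of xs v)) (sorted_list_of_set (set (drop m xs)))"
    unfolding inv_word_def filter_map by (simp add: sorted_list_of_set_filter[symmetric] o_def)
  also have "\<dots> = map (\<lambda>p. p + m) (inv_word (drop m xs))"
    unfolding inv_word_def map_map using index_of_drop[OF assms] by (intro map_cong) auto
  finally show ?thesis .
qed

lemma inv_word_map_strict_mono:
  assumes "distinct xs" and mono: "strict_mono_on (set xs) f"
  shows "inv_word (map f xs) = inv_word xs"
proof -
  have inj: "inj_on f (set xs)"
    using mono by (rule strict_mono_on_imp_inj_on)
  then have "distinct (map f xs)"
    using assms(1) by (simp add: distinct_map)
  have "sorted_wrt (<) (map f (sorted_list_of_set (set xs)))"
    by (rule sorted_wrt_map_mono[OF strict_sorted_list_of_set])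
      (use mono in \<open>auto simp: strict_mono_on_def\<close>)
  then have "sorted_list_of_set (f ` set xs) = map f (sorted_list_of_set (set xs))"
    using inj by (subst sorted_list_of_set_unique[symmetric]) (auto simp: card_image)
  moreover have "index_of (map f xs) (f v) = index_of xs v" if "v \<in> set xs" for v
    using index_of_in_set[OF that] index_of_nth[OF \<open>distinct (map f xs)\<close>, of "index_of xs v"]
    by simp
  ultimately show ?thesis
    unfolding inv_word_def by simp
qed

section \<open>Standardization\<close>

lemma strict_mono_on_Suc_card_less:
  fixes A :: "'a::linorder set"
  assumes "finite A"
  shows "strict_mono_on A (\<lambda>x. Suc (card {y \<in> A. y < x}))"
proof (rule strict_mono_onI)
  fix x y assume "x \<in> A" "y \<in> A" "x < y"
  then have "{z \<in> A. z < x} \<subset> {z \<in> A. z < y}"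
    by auto
  then show "Suc (card {z \<in> A. z < x}) < Suc (card {z \<in> A. z < y})"
    using assms by (simp add: psubset_card_mono)
qed

lemma red_in_perms:
  assumes "distinct xs"
  shows "red xs \<in> perms (length xs)"
proof -
  have "distinct (red xs)"
    using assms strict_mono_on_imp_inj_on[OF strict_mono_on_Suc_card_less[of "set xs"]]
    by (simp add: red_def distinct_map)
  moreover have "set (red xs) \<subseteq> {1..length xs}"
  proof
    fix p assume "p \<in> set (red xs)"
    then obtain x where "x \<in> set xs" and p: "p = Suc (card {y \<in> set xs. y < x})"
      unfolding red_def by auto
    then have "card {y \<in> set xs. y < x} < card (set xs)"
      by (intro psubset_card_mono) auto
    then show "p \<in> {1..length xs}"
      using p distinct_card[OF assms] by simp
  qed
  ultimately have "set (red xs) = {1..length xs}"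
    using distinct_card[of "red xs"] by (intro card_subset_eq) (auto simp: red_def)
  with \<open>distinct (red xs)\<close> show ?thesis
    unfolding perms_def by simp
qed

lemma inv_word_red: "distinct xs \<Longrightarrow> inv_word (red xs) = inv_word xs"
  unfolding red_def by (simp add: inv_word_map_strict_mono strict_mono_on_Suc_card_less)

lemma red_eq_iff_inv_word_eq:
  assumes "distinct xs" and \<sigma>: "\<sigma> \<in> perms (length xs)"
  shows "red xs = \<sigma> \<longleftrightarrow> inv_word xs = inv_perm \<sigma>"
proof -
  have red: "red xs \<in> perms (length xs)"
    using assms(1) by (rule red_in_perms)
  then have "inv_word xs = inv_perm (red xs)"
    using inv_perm_eq_inv_word inv_word_red[OF assms(1)] by metis
  then show ?thesis
    using inv_perm_inv_perm[OF red] inv_perm_inv_perm[OF \<sigma>] by metis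
qed

section \<open>Shuffles\<close>

lemma subseq_distinct: "subseq xs ys \<Longrightarrow> distinct ys \<Longrightarrow> distinct xs"
  by (metis in_set_subseqs subseqs_distinctD)

lemma subseq_set: "subseq xs ys \<Longrightarrow> set xs \<subseteq> set ys"
  by (auto elim: list_emb_set)

lemma filter_in_set_eq_if_subseq:
  assumes "distinct ys" and "subseq xs ys"
  shows "filter (\<lambda>y. y \<in> set xs) ys = xs"
proof -
  have "set (filter (\<lambda>y. y \<in> set xs) ys) = set xs"
    using subseq_set[OF assms(2)] by auto
  then have "length (filter (\<lambda>y. y \<in> set xs) ys) = length xs"
    using assms subseq_distinct[OF assms(2)] by (metis distinct_card distinct_filter)
  moreover have "subseq xs (filter (\<lambda>y. y \<in> set xs) ys)"
    using subseq_filter[OF assms(2), of "\<lambda>y. y \<in> set xs"] by simp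
  ultimately show ?thesis
    by (metis subseq_same_length)
qed

lemma subseq_iff_filter_eq:
  assumes "distinct ys" and "set xs = {y \<in> set ys. P y}"
  shows "subseq xs ys \<longleftrightarrow> filter P ys = xs"
proof -
  have "filter (\<lambda>y. y \<in> set xs) ys = filter P ys"
    using assms(2) by (intro filter_cong) auto
  then show ?thesis
    using filter_in_set_eq_if_subseq[OF assms(1), of xs] subseq_filter_left[of P ys] by auto
qed

lemma is_shuffle_iff_filter:
  assumes "distinct \<alpha>" and "set \<pi> = {x \<in> set \<alpha>. P x}" and "set \<delta> = {x \<in> set \<alpha>. \<not> P x}"
  shows "is_shuffle \<pi> \<delta> \<alpha> \<longleftrightarrow> filter P \<alpha> = \<pi> \<and> filter (\<lambda>x. \<not> P x) \<alpha> = \<delta>"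
  unfolding is_shuffle_def subseq_iff_filter_eq[OF assms(1,2)] subseq_iff_filter_eq[OF assms(1,3)]
  using assms(1) sum_length_filter_compl[of P \<alpha>] by auto

lemma set_shuffle:
  assumes "is_shuffle \<pi> \<delta> \<alpha>" and "set \<pi> \<inter> set \<delta> = {}"
  shows "set \<alpha> = set \<pi> \<union> set \<delta>"
proof (rule card_subset_eq[symmetric])
  have "distinct \<alpha>" and "subseq \<pi> \<alpha>" and "subseq \<delta> \<alpha>" and "length \<alpha> = length \<pi> + length \<delta>"
    using assms(1) unfolding is_shuffle_def by auto
  moreover have "distinct \<pi>" and "distinct \<delta>"
    using subseq_distinct \<open>distinct \<alpha>\<close> \<open>subseq \<pi> \<alpha>\<close> \<open>subseq \<delta> \<alpha>\<close> by blast+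
  ultimately show "set \<pi> \<union> set \<delta> \<subseteq> set \<alpha>" and "card (set \<pi> \<union> set \<delta>) = card (set \<alpha>)"
    using subseq_set assms(2) by (auto simp: card_Un_disjoint distinct_card)
qed simp

lemma Sh_l_subset_perms:
  assumes "set \<pi> \<union> set \<delta> = {1..n}" and "set \<pi> \<inter> set \<delta> = {}"
  shows "Sh_l \<pi> \<delta> \<subseteq> perms n"
proof
  fix \<alpha> assume "\<alpha> \<in> Sh_l \<pi> \<delta>"
  then have "is_shuffle \<pi> \<delta> \<alpha>"
    unfolding Sh_l_def by simp
  then show "\<alpha> \<in> perms n"
    using set_shuffle[OF _ assms(2)] assms(1) unfolding perms_def is_shuffle_def by simp
qed

lemma last_filter:
  assumes "xs \<noteq> []" and "P (last xs)"
  shows "last (filter P xs) = last xs"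
proof -
  have "filter P xs = filter P (butlast xs) @ [last xs]"
    using assms by (metis append_butlast_last_id filter.simps filter_append)
  then show ?thesis
    by simp
qed

lemma set_shifted_inverse:
  assumes "T \<in> perms k"
  shows "set ((j + 1) # map (\<lambda>x. x + j + 1) T) = {j + 1..j + k + 1}"
proof -
  have "set (map (\<lambda>x. x + j + 1) T) = (\<lambda>x. x + (j + 1)) ` {1..k}"
    using assms by (simp add: perms_def add.assoc)
  also have "\<dots> = {j + 2..j + k + 1}"
    unfolding image_add_atLeastAtMost' by simp
  finally show ?thesis
    by auto
qed

lemma is_shuffle_blocks_iff:
  assumes "\<alpha> \<in> perms (j + k + 1)" and "\<pi> \<in> perms j" and "set \<delta> = {j + 1..j + k + 1}"
  shows "is_shuffle \<pi> \<delta> \<alpha> \<longleftrightarrow> filter (\<lambda>p. p \<le> j) \<alpha> = \<pi> \<and> filter (\<lambda>p. j < p) \<alpha> = \<delta>"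
proof -
  have "set \<pi> = {p \<in> set \<alpha>. p \<le> j}" and "set \<delta> = {p \<in> set \<alpha>. \<not> p \<le> j}"
    using assms unfolding perms_def by auto
  then show ?thesis
    using is_shuffle_iff_filter[of \<alpha> \<pi> "\<lambda>p. p \<le> j" \<delta>] assms(1)
    unfolding perms_def not_le by simp
qed

lemma in_Sh_l_iff:
  assumes \<alpha>: "\<alpha> \<in> perms (j + k + 1)" and \<pi>: "\<pi> \<in> perms j" and T: "T \<in> perms k"
  shows "\<alpha> \<in> Sh_l \<pi> ((j + 1) # map (\<lambda>x. x + j + 1) T) \<longleftrightarrow>
         \<alpha> ! 0 = j + 1 \<and> filter (\<lambda>p. p \<le> j) \<alpha> = \<pi> \<and>
         filter (\<lambda>p. j + 1 < p) \<alpha> = map (\<lambda>x. x + j + 1) T"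
proof -
  have "filter (\<lambda>p. j < p) \<alpha> = (j + 1) # filter (\<lambda>p. j + 1 < p) \<alpha>" if \<alpha>0: "\<alpha> ! 0 = j + 1"
  proof -
    obtain \<beta> where \<beta>: "\<alpha> = (j + 1) # \<beta>"
      using \<alpha>0 length_perms[OF \<alpha>] by (cases \<alpha>) auto
    then have "j + 1 \<notin> set \<beta>"
      using \<alpha> by (simp add: perms_def)
    then have "filter (\<lambda>p. j < p) \<beta> = filter (\<lambda>p. j + 1 < p) \<beta>"
      by (intro filter_cong) (auto intro: Suc_lessI)
    then show ?thesis
      using \<beta> by simp
  qed
  then show ?thesis
    unfolding Sh_l_def mem_Collect_eq is_shuffle_blocks_iff[OF \<alpha> \<pi> set_shifted_inverse[OF T]]
    by auto
qed

lemma in_Sh_ls_iff: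
  assumes \<alpha>: "\<alpha> \<in> perms (j + k + 1)" and \<pi>: "\<pi> \<in> perms j" and T: "T \<in> perms k"
    and "0 < j + k"
  defines "\<delta> \<equiv> (j + 1) # map (\<lambda>x. x + j + 1) T"
  shows "\<alpha> \<in> Sh_ls \<pi> \<delta> \<longleftrightarrow> \<alpha> \<in> Sh_l \<pi> \<delta> \<and> j + 1 < \<alpha> ! (j + k)"
proof -
  have "\<alpha> \<noteq> []"
    using length_perms[OF \<alpha>] by auto
  then have last_\<alpha>: "last \<alpha> = \<alpha> ! (j + k)"
    using length_perms[OF \<alpha>] by (simp add: last_conv_nth)
  have "\<alpha> ! (j + k) = last \<delta> \<longleftrightarrow> j + 1 < \<alpha> ! (j + k)" if "\<alpha> \<in> Sh_l \<pi> \<delta>"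
  proof
    have \<alpha>0: "\<alpha> ! 0 = j + 1" and filter_\<alpha>: "filter (\<lambda>p. j < p) \<alpha> = \<delta>"
      using that is_shuffle_blocks_iff[OF \<alpha> \<pi> set_shifted_inverse[OF T]]
      unfolding Sh_l_def \<delta>_def by auto
    show "j + 1 < \<alpha> ! (j + k)" if "\<alpha> ! (j + k) = last \<delta>"
    proof -
      have "\<alpha> ! (j + k) \<in> set \<delta>"
        using that last_in_set[of \<delta>] by (simp add: \<delta>_def del: last.simps)
      moreover have "\<alpha> ! (j + k) \<noteq> \<alpha> ! 0"
        using \<alpha> \<open>0 < j + k\<close> nth_eq_iff_index_eq[of \<alpha> "j + k" 0]
        by (simp add: perms_def length_perms[OF \<alpha>])
      ultimately show ?thesis
        using \<alpha>0 set_shifted_inverse[OF T] by (auto simp: \<delta>_def)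
    qed
    show "\<alpha> ! (j + k) = last \<delta>" if "j + 1 < \<alpha> ! (j + k)"
      using last_filter[OF \<open>\<alpha> \<noteq> []\<close>, of "\<lambda>p. j < p"] that filter_\<alpha> last_\<alpha> by simp
  qed
  moreover have "\<delta> ! (length \<delta> - 1) = last \<delta>"
    by (simp add: \<delta>_def last_conv_nth)
  ultimately show ?thesis
    unfolding Sh_ls_def Sh_l_def using length_perms[OF \<pi>] length_perms[OF T]
    by (auto simp: \<delta>_def)
qed

lemma in_Sh_ll_iff:
  assumes \<alpha>: "\<alpha> \<in> perms (j + k + 1)" and \<pi>: "\<pi> \<in> perms j" and T: "T \<in> perms k"
    and "0 < j + k"
  defines "\<delta> \<equiv> (j + 1) # map (\<lambda>x. x + j + 1) T"
  shows "\<alpha> \<in> Sh_ll \<pi> \<delta> \<longleftrightarrow> \<alpha> \<in> Sh_l \<pi> \<delta> \<and> j + 1 < \<alpha> ! 1"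
proof -
  have "2 \<le> length \<delta> \<and> \<alpha> ! 1 = \<delta> ! 1 \<longleftrightarrow> j + 1 < \<alpha> ! 1" if "\<alpha> \<in> Sh_l \<pi> \<delta>"
  proof -
    have \<alpha>0: "\<alpha> ! 0 = j + 1" and filter_\<alpha>: "filter (\<lambda>p. j < p) \<alpha> = \<delta>"
      using that is_shuffle_blocks_iff[OF \<alpha> \<pi> set_shifted_inverse[OF T]]
      unfolding Sh_l_def \<delta>_def by auto
    obtain b \<gamma> where \<alpha>_eq: "\<alpha> = (j + 1) # b # \<gamma>"
      using \<alpha>0 length_perms[OF \<alpha>] \<open>0 < j + k\<close> by (cases \<alpha>; cases "tl \<alpha>") auto
    then have "b \<noteq> j + 1"
      using \<alpha> by (simp add: perms_def)
    then have "j < b \<longleftrightarrow> j + 1 < b"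
      by auto
    then show ?thesis
      using filter_\<alpha> set_shifted_inverse[OF T] unfolding \<alpha>_eq \<delta>_def
      by (auto simp: Suc_le_eq)
  qed
  then show ?thesis
    unfolding Sh_ll_def Sh_l_def by auto
qed

section \<open>Inverting the decomposition \<mu> = \<sigma>' 1 \<tau>'\<close>

lemma split_at_letter_iff:
  assumes "length \<sigma> = j" and "j < length \<mu>"
  shows "(\<exists>\<sigma>' \<tau>'. \<mu> = \<sigma>' @ [a] @ \<tau>' \<and> red \<sigma>' = \<sigma> \<and> red \<tau>' = \<tau> \<and> Q \<tau>') \<longleftrightarrow>
         \<mu> ! j = a \<and> red (take j \<mu>) = \<sigma> \<and> red (drop (j + 1) \<mu>) = \<tau> \<and> Q (drop (j + 1) \<mu>)"
proof
  assume "\<exists>\<sigma>' \<tau>'. \<mu> = \<sigma>' @ [a] @ \<tau>' \<and> red \<sigma>' = \<sigma> \<and> red \<tau>' = \<tau> \<and> Q \<tau>'"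
  then obtain \<sigma>' \<tau>' where "\<mu> = \<sigma>' @ [a] @ \<tau>'" "red \<sigma>' = \<sigma>" "red \<tau>' = \<tau>" "Q \<tau>'"
    by blast
  moreover have "length \<sigma>' = j"
    using \<open>red \<sigma>' = \<sigma>\<close> assms(1) unfolding red_def by auto
  ultimately show "\<mu> ! j = a \<and> red (take j \<mu>) = \<sigma> \<and> red (drop (j + 1) \<mu>) = \<tau> \<and> Q (drop (j + 1) \<mu>)"
    by (simp add: nth_append)
next
  assume "\<mu> ! j = a \<and> red (take j \<mu>) = \<sigma> \<and> red (drop (j + 1) \<mu>) = \<tau> \<and> Q (drop (j + 1) \<mu>)"
  moreover have "\<mu> = take j \<mu> @ [\<mu> ! j] @ drop (j + 1) \<mu>"
    using id_take_nth_drop[OF assms(2)] by simp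
  ultimately show "\<exists>\<sigma>' \<tau>'. \<mu> = \<sigma>' @ [a] @ \<tau>' \<and> red \<sigma>' = \<sigma> \<and> red \<tau>' = \<tau> \<and> Q \<tau>'"
    by metis
qed

lemma in_set_drop_iff_nth_inv_perm:
  assumes \<mu>: "\<mu> \<in> perms n" and v: "v \<in> {1..n}"
  shows "v \<in> set (drop m \<mu>) \<longleftrightarrow> m < inv_perm \<mu> ! (v - 1)"
proof -
  have "v - 1 < n" and "Suc (v - 1) = v"
    using v by auto
  then have "inv_perm \<mu> ! (v - 1) = Suc (index_of \<mu> v)"
    using nth_inv_perm[OF \<mu>, of "v - 1"] by simp
  then show ?thesis
    using in_set_drop_iff_index_of[of \<mu> v m] \<mu> v by (auto simp: perms_def)
qed

lemma split_at_one_iff_inv_perm: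
  assumes \<mu>: "\<mu> \<in> perms (j + k + 1)" and \<sigma>: "\<sigma> \<in> perms j" and \<tau>: "\<tau> \<in> perms k"
  shows "\<mu> ! j = 1 \<and> red (take j \<mu>) = \<sigma> \<and> red (drop (j + 1) \<mu>) = \<tau> \<longleftrightarrow>
         inv_perm \<mu> ! 0 = j + 1 \<and> filter (\<lambda>p. p \<le> j) (inv_perm \<mu>) = inv_perm \<sigma> \<and>
         filter (\<lambda>p. j + 1 < p) (inv_perm \<mu>) = map (\<lambda>x. x + j + 1) (inv_perm \<tau>)"
proof -
  have "distinct \<mu>" and "1 \<in> set \<mu>" and len: "length \<mu> = j + k + 1"
    using \<mu> length_perms[OF \<mu>] by (auto simp: perms_def)
  have "inv_perm \<mu> ! 0 = Suc (index_of \<mu> 1)"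
    using nth_inv_perm[OF \<mu>, of 0] by simp
  then have "\<mu> ! j = 1 \<longleftrightarrow> inv_perm \<mu> ! 0 = j + 1"
    using index_of_in_set[OF \<open>1 \<in> set \<mu>\<close>] index_of_nth[OF \<open>distinct \<mu>\<close>, of j] len by auto
  moreover have "red (take j \<mu>) = \<sigma> \<longleftrightarrow> filter (\<lambda>p. p \<le> j) (inv_perm \<mu>) = inv_perm \<sigma>"
    using red_eq_iff_inv_word_eq[of "take j \<mu>" \<sigma>] \<sigma> \<open>distinct \<mu>\<close> len
    by (simp add: filter_le_inv_word inv_perm_eq_inv_word[OF \<mu>])
  moreover have "red (drop (j + 1) \<mu>) = \<tau> \<longleftrightarrow>
      filter (\<lambda>p. j + 1 < p) (inv_perm \<mu>) = map (\<lambda>x. x + j + 1) (inv_perm \<tau>)"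
  proof -
    have "inj (\<lambda>x::nat. x + j + 1)"
      by (simp add: inj_on_def)
    then show ?thesis
      using red_eq_iff_inv_word_eq[of "drop (j + 1) \<mu>" \<tau>] \<tau> \<open>distinct \<mu>\<close> len
        filter_gt_inv_word[OF \<open>distinct \<mu>\<close>, of "j + 1"]
      by (simp add: inv_perm_eq_inv_word[OF \<mu>] add.assoc)
  qed
  ultimately show ?thesis
    by simp
qed

lemma split_at_one_iff_inv_perm_in_Sh_l:
  assumes \<mu>: "\<mu> \<in> perms (j + k + 1)" and \<sigma>: "\<sigma> \<in> perms j" and \<tau>: "\<tau> \<in> perms k"
  shows "(\<exists>\<sigma>' \<tau>'. \<mu> = \<sigma>' @ [1] @ \<tau>' \<and> red \<sigma>' = \<sigma> \<and> red \<tau>' = \<tau> \<and> Q \<tau>') \<longleftrightarrow>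
         inv_perm \<mu> \<in> Sh_l (inv_perm \<sigma>) ((j + 1) # map (\<lambda>x. x + j + 1) (inv_perm \<tau>)) \<and>
         Q (drop (j + 1) \<mu>)"
  using split_at_letter_iff[of \<sigma> j \<mu>] split_at_one_iff_inv_perm[OF assms]
    in_Sh_l_iff[OF inv_perm_in_perms[OF \<mu>] inv_perm_in_perms[OF \<sigma>] inv_perm_in_perms[OF \<tau>]]
    length_perms[OF \<sigma>] length_perms[OF \<mu>]
  by auto

lemma diamond_eq:
  assumes "\<sigma> \<in> perms j" and "\<tau> \<in> perms k"
  shows "diamond \<sigma> \<tau> = {\<mu> \<in> perms (j + k + 1).
           inv_perm \<mu> \<in> Sh_l (inv_perm \<sigma>) ((j + 1) # map (\<lambda>x. x + j + 1) (inv_perm \<tau>))}"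
  using split_at_one_iff_inv_perm_in_Sh_l[OF _ assms, of _ "\<lambda>_. True"]
  unfolding diamond_def length_perms[OF assms(1)] length_perms[OF assms(2)] by auto

lemma utri_eq:
  assumes "\<sigma> \<in> perms j" and "\<tau> \<in> perms k" and "0 < j + k"
  shows "utri \<sigma> \<tau> = {\<mu> \<in> perms (j + k + 1).
           inv_perm \<mu> \<in> Sh_ls (inv_perm \<sigma>) ((j + 1) # map (\<lambda>x. x + j + 1) (inv_perm \<tau>))}"
proof -
  have "(\<exists>\<sigma>' \<tau>'. \<mu> = \<sigma>' @ [1] @ \<tau>' \<and> red \<sigma>' = \<sigma> \<and> red \<tau>' = \<tau> \<and> j + k + 1 \<in> set \<tau>') \<longleftrightarrow>
      inv_perm \<mu> \<in> Sh_ls (inv_perm \<sigma>) ((j + 1) # map (\<lambda>x. x + j + 1) (inv_perm \<tau>))"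
    if \<mu>: "\<mu> \<in> perms (j + k + 1)" for \<mu>
    using split_at_one_iff_inv_perm_in_Sh_l[OF \<mu> assms(1,2)]
      in_set_drop_iff_nth_inv_perm[OF \<mu>, of "j + k + 1" "j + 1"]
      in_Sh_ls_iff[OF inv_perm_in_perms[OF \<mu>] inv_perm_in_perms[OF assms(1)]
        inv_perm_in_perms[OF assms(2)] assms(3)]
    by simp
  then show ?thesis
    unfolding utri_def length_perms[OF assms(1)] length_perms[OF assms(2)] by auto
qed

lemma dtri_eq:
  assumes "\<sigma> \<in> perms j" and "\<tau> \<in> perms k" and "0 < j + k"
  shows "dtri \<sigma> \<tau> = {\<mu> \<in> perms (j + k + 1).
           inv_perm \<mu> \<in> Sh_ll (inv_perm \<sigma>) ((j + 1) # map (\<lambda>x. x + j + 1) (inv_perm \<tau>))}"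
proof -
  have "(\<exists>\<sigma>' \<tau>'. \<mu> = \<sigma>' @ [1] @ \<tau>' \<and> red \<sigma>' = \<sigma> \<and> red \<tau>' = \<tau> \<and> 2 \<in> set \<tau>') \<longleftrightarrow>
      inv_perm \<mu> \<in> Sh_ll (inv_perm \<sigma>) ((j + 1) # map (\<lambda>x. x + j + 1) (inv_perm \<tau>))"
    if \<mu>: "\<mu> \<in> perms (j + k + 1)" for \<mu>
    using split_at_one_iff_inv_perm_in_Sh_l[OF \<mu> assms(1,2)]
      in_set_drop_iff_nth_inv_perm[OF \<mu>, of 2 "j + 1"] assms(3)
      in_Sh_ll_iff[OF inv_perm_in_perms[OF \<mu>] inv_perm_in_perms[OF assms(1)]
        inv_perm_in_perms[OF assms(2)] assms(3)]
    by simp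
  then show ?thesis
    unfolding dtri_def length_perms[OF assms(1)] length_perms[OF assms(2)] by auto
qed

lemma sum_ides_eq_sum_des:
  assumes "B \<subseteq> perms n"
  shows "(\<Sum>\<mu>\<in>{\<mu> \<in> perms n. inv_perm \<mu> \<in> B}. f (ides \<mu>)) = (\<Sum>\<alpha>\<in>B. f (des \<alpha>))"
proof -
  define A where "A = {\<mu> \<in> perms n. inv_perm \<mu> \<in> B}"
  have "inj_on inv_perm (perms n)"
    by (rule inj_on_inverseI[where g = inv_perm]) (rule inv_perm_inv_perm)
  then have "inj_on inv_perm A"
    unfolding A_def by (rule inj_on_subset) blast
  moreover have "inv_perm ` A = B"
    unfolding A_def
  proof (intro equalityI subsetI)
    fix \<alpha> assume "\<alpha> \<in> B"
    then have "\<alpha> \<in> perms n"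
      using assms by blast
    then have "\<alpha> = inv_perm (inv_perm \<alpha>)" and "inv_perm \<alpha> \<in> perms n"
      by (rule inv_perm_inv_perm[symmetric], rule inv_perm_in_perms)
    with \<open>\<alpha> \<in> B\<close> show "\<alpha> \<in> inv_perm ` {\<mu> \<in> perms n. inv_perm \<mu> \<in> B}"
      by auto
  qed auto
  ultimately show ?thesis
    unfolding ides_def A_def[symmetric] using sum.reindex[of inv_perm A "\<lambda>\<alpha>. f (des \<alpha>)"] by simp
qed

theorem proposition3p3:
  fixes \<sigma> \<tau> :: "nat list" and j k :: nat and t :: "'a::comm_ring_1"
  assumes "\<sigma> \<in> perms j" and "\<tau> \<in> perms k" and "0 < j + k"
  defines "\<pi> \<equiv> inv_perm \<sigma>"
    and "\<delta> \<equiv> (j + 1) # map (\<lambda>x. x + j + 1) (inv_perm \<tau>)"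
  shows "(\<Sum>\<mu>\<in>diamond \<sigma> \<tau>. t ^ ides \<mu>) = (\<Sum>\<alpha>\<in>Sh_l \<pi> \<delta>. t ^ des \<alpha>) \<and>
         (\<Sum>\<mu>\<in>utri \<sigma> \<tau>. t ^ ides \<mu>) = (\<Sum>\<alpha>\<in>Sh_ls \<pi> \<delta>. t ^ des \<alpha>) \<and>
         (\<Sum>\<mu>\<in>dtri \<sigma> \<tau>. t ^ ides \<mu>) = (\<Sum>\<alpha>\<in>Sh_ll \<pi> \<delta>. t ^ des \<alpha>)"
proof -
  have "set \<pi> = {1..j}"
    using inv_perm_in_perms[OF assms(1)] unfolding \<pi>_def perms_def by simp
  moreover have "set \<delta> = {j + 1..j + k + 1}"
    unfolding \<delta>_def using inv_perm_in_perms[OF assms(2)] by (rule set_shifted_inverse)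
  ultimately have Sh_l: "Sh_l \<pi> \<delta> \<subseteq> perms (j + k + 1)"
    by (intro Sh_l_subset_perms) auto
  then have "Sh_ls \<pi> \<delta> \<subseteq> perms (j + k + 1)" and "Sh_ll \<pi> \<delta> \<subseteq> perms (j + k + 1)"
    unfolding Sh_l_def Sh_ls_def Sh_ll_def by auto
  with Sh_l show ?thesis
    unfolding diamond_eq[OF assms(1,2)] utri_eq[OF assms(1-3)] dtri_eq[OF assms(1-3)]
      \<pi>_def[symmetric] \<delta>_def[symmetric]
    by (simp add: sum_ides_eq_sum_des)
qed

end
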